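(* Let $\mathcal{C}$ be a pre-Hilbert $*$-category and $\mathrm{Con}(\mathcal{C})$ its wide subcategory of contractions. (i) Every split monomorphism in $\mathrm{Con}(\mathcal{C})$ is isometric. (ii) The inclusion functor $\mathrm{Con}(\mathcal{C})\hookrightarrow\mathcal{C}$ preserves jointly monic wide spans. (iii) The inclusion functor $\mathrm{Con}(\mathcal{C})\hookrightarrow\mathcal{C}$ creates isometric equalisers; in particular, in $\mathrm{Con}(\mathcal{C})$ every parallel pair of morphisms has an isometric equaliser. (iv) In $\mathrm{Con}(\mathcal{C})$, every equaliser is isometric.
   Context: A $*$-category is a category with a choice of $f^*\colon Y\to X$ for each $f\colon X\to Y$ such that $1^*=1$, $(gf)^*=f^*g^*$, $(f^* )^*=f$; $f$ is an isometry if $f^*f=1$. A pre-Hilbert $*$-category is a $*$-category with (R1) a zero object, (R2) orthonormal biproducts of all pairs of objects (biproducts $(X,s_1,r_1,s_2,r_2)$ with $r_k=s_k^*$), (R3) an isometric kernel for every morphism, and (R4) every diagonal $\Delta\colon X\to X\oplus X$ a kernel of some morphism; such a category is additive. For Hermitian endomorphisms $a,b$ of $A$, $a\le b$ means $b-a=y^*y$ for some $y\colon A\to Y$. A contraction is a morphism $f$ with $f^*f\leq 1$; contractions contain all identities and are closed under composition and $*$, forming the wide $*$-subcategory $\mathrm{Con}(\mathcal{C})$. A wide span $(g_\alpha\colon Y\to Z_\alpha)_{\alpha\in I}$ is jointly monic if $g_\alpha h_1=g_\alpha h_2$ for all $\alpha$ implies $h_1=h_2$. "Creates isometric equalisers"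 here means: for any parallel pair of contractions, an isometric equaliser of it in $\mathcal{C}$ is a morphism of $\mathrm{Con}(\mathcal{C})$ and is an equaliser of the pair in $\mathrm{Con}(\mathcal{C})$. *)

theory Defs
  imports Main
begin

record ('o, 'm) starcat =
  Ob  :: "'o set"
  Arr :: "'m set"
  Dom :: "'m \<Rightarrow> 'o"
  Cod :: "'m \<Rightarrow> 'o"
  Cmp :: "'m \<Rightarrow> 'm \<Rightarrow> 'm"   (* Cmp C g f = g \<circ> f  (first f, then g) *)
  Idt :: "'o \<Rightarrow> 'm"
  Star :: "'m \<Rightarrow> 'm"

definition hom :: "('o, 'm) starcat \<Rightarrow> 'o \<Rightarrow> 'o \<Rightarrow> 'm set" where
  "hom C X Y = {f \<in> Arr C. Dom C f = X \<and> Cod C f = Y}"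

definition star_category :: "('o, 'm) starcat \<Rightarrow> bool" where
  "star_category C \<longleftrightarrow>
     (\<forall>f \<in> Arr C. Dom C f \<in> Ob C \<and> Cod C f \<in> Ob C) \<and>
     (\<forall>X \<in> Ob C. Idt C X \<in> hom C X X) \<and>
     (\<forall>X Y Z f g. f \<in> hom C X Y \<longrightarrow> g \<in> hom C Y Z \<longrightarrow> Cmp C g f \<in> hom C X Z) \<and>
     (\<forall>f \<in> Arr C. Cmp C f (Idt C (Dom C f)) = f \<and> Cmp C (Idt C (Cod C f)) f = f) \<and>
     (\<forall>f g h. f \<in> Arr C \<longrightarrow> g \<in> Arr C \<longrightarrow> h \<in> Arr C \<longrightarrow>
        Cod C f = Dom C g \<longrightarrow> Cod C g = Dom C h \<longrightarrow>
        Cmp C h (Cmp C g f) = Cmp C (Cmp C h g) f) \<and>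
     (\<forall>X Y f. f \<in> hom C X Y \<longrightarrow> Star C f \<in> hom C Y X) \<and>
     (\<forall>X \<in> Ob C. Star C (Idt C X) = Idt C X) \<and>
     (\<forall>f g. f \<in> Arr C \<longrightarrow> g \<in> Arr C \<longrightarrow> Cod C f = Dom C g \<longrightarrow>
        Star C (Cmp C g f) = Cmp C (Star C f) (Star C g)) \<and>
     (\<forall>f \<in> Arr C. Star C (Star C f) = f)"

definition isometry :: "('o, 'm) starcat \<Rightarrow> 'm \<Rightarrow> bool" where
  "isometry C f \<longleftrightarrow> f \<in> Arr C \<and> Cmp C (Star C f) f = Idt C (Dom C f)"

definition zero_object :: "('o, 'm) starcat \<Rightarrow> 'o \<Rightarrow> bool" where
  "zero_object C Z \<longleftrightarrow> Z \<in> Ob C \<and>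
     (\<forall>X \<in> Ob C. (\<exists>!f. f \<in> hom C Z X) \<and> (\<exists>!f. f \<in> hom C X Z))"

definition zero_arr :: "('o, 'm) starcat \<Rightarrow> 'm \<Rightarrow> bool" where
  "zero_arr C f \<longleftrightarrow> f \<in> Arr C \<and>
     (\<exists>Z u v. zero_object C Z \<and> u \<in> hom C (Dom C f) Z \<and> v \<in> hom C Z (Cod C f)
              \<and> f = Cmp C v u)"

definition is_product :: "('o, 'm) starcat \<Rightarrow> 'o \<Rightarrow> 'o \<Rightarrow> 'o \<Rightarrow> 'm \<Rightarrow> 'm \<Rightarrow> bool" where
  "is_product C X1 X2 P p1 p2 \<longleftrightarrow> p1 \<in> hom C P X1 \<and> p2 \<in> hom C P X2 \<and>
     (\<forall>W f1 f2. f1 \<in> hom C W X1 \<longrightarrow> f2 \<in> hom C W X2 \<longrightarrow>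
        (\<exists>!u. u \<in> hom C W P \<and> Cmp C p1 u = f1 \<and> Cmp C p2 u = f2))"

definition is_coproduct :: "('o, 'm) starcat \<Rightarrow> 'o \<Rightarrow> 'o \<Rightarrow> 'o \<Rightarrow> 'm \<Rightarrow> 'm \<Rightarrow> bool" where
  "is_coproduct C X1 X2 P i1 i2 \<longleftrightarrow> i1 \<in> hom C X1 P \<and> i2 \<in> hom C X2 P \<and>
     (\<forall>W f1 f2. f1 \<in> hom C X1 W \<longrightarrow> f2 \<in> hom C X2 W \<longrightarrow>
        (\<exists>!u. u \<in> hom C P W \<and> Cmp C u i1 = f1 \<and> Cmp C u i2 = f2))"

definition biproduct ::
  "('o, 'm) starcat \<Rightarrow> 'o \<Rightarrow> 'o \<Rightarrow> 'o \<Rightarrow> 'm \<Rightarrow> 'm \<Rightarrow> 'm \<Rightarrow> 'm \<Rightarrow> bool" where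
  "biproduct C X1 X2 X s1 r1 s2 r2 \<longleftrightarrow>
     s1 \<in> hom C X1 X \<and> r1 \<in> hom C X X1 \<and> s2 \<in> hom C X2 X \<and> r2 \<in> hom C X X2 \<and>
     Cmp C r1 s1 = Idt C X1 \<and> Cmp C r2 s2 = Idt C X2 \<and>
     zero_arr C (Cmp C r2 s1) \<and> zero_arr C (Cmp C r1 s2) \<and>
     is_product C X1 X2 X r1 r2 \<and> is_coproduct C X1 X2 X s1 s2"

definition orthonormal_biproduct ::
  "('o, 'm) starcat \<Rightarrow> 'o \<Rightarrow> 'o \<Rightarrow> 'o \<Rightarrow> 'm \<Rightarrow> 'm \<Rightarrow> 'm \<Rightarrow> 'm \<Rightarrow> bool" where
  "orthonormal_biproduct C X1 X2 X s1 r1 s2 r2 \<longleftrightarrow>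
     biproduct C X1 X2 X s1 r1 s2 r2 \<and> r1 = Star C s1 \<and> r2 = Star C s2"

definition kernel :: "('o, 'm) starcat \<Rightarrow> 'm \<Rightarrow> 'm \<Rightarrow> bool" where
  "kernel C f k \<longleftrightarrow> f \<in> Arr C \<and> k \<in> Arr C \<and> Cod C k = Dom C f \<and>
     zero_arr C (Cmp C f k) \<and>
     (\<forall>h \<in> Arr C. Cod C h = Dom C f \<longrightarrow> zero_arr C (Cmp C f h) \<longrightarrow>
        (\<exists>!u. u \<in> hom C (Dom C h) (Dom C k) \<and> Cmp C k u = h))"

definition pre_hilbert :: "('o, 'm) starcat \<Rightarrow> bool" where
  "pre_hilbert C \<longleftrightarrow> star_category C \<and>
     (\<exists>Z. zero_object C Z) \<and>
     (\<forall>X1 \<in> Ob C. \<forall>X2 \<in> Ob C. \<exists>X s1 r1 s2 r2. orthonormal_biproduct C X1 X2 X s1 r1 s2 r2) \<and>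
     (\<forall>f \<in> Arr C. \<exists>k. kernel C f k \<and> isometry C k) \<and>
     (\<forall>X \<in> Ob C. \<forall>Z s1 r1 s2 r2 d.
        orthonormal_biproduct C X X Z s1 r1 s2 r2 \<and> d \<in> hom C X Z \<and>
        Cmp C r1 d = Idt C X \<and> Cmp C r2 d = Idt C X
        \<longrightarrow> (\<exists>f. kernel C f d))"

text \<open>\<open>h = f + g\<close>, with the addition of the (semi)additive structure induced by
  biproducts: \<open>f + g = \<nabla> \<circ> \<langle>f, g\<rangle>\<close>.\<close>
definition arr_sum :: "('o, 'm) starcat \<Rightarrow> 'm \<Rightarrow> 'm \<Rightarrow> 'm \<Rightarrow> bool" where
  "arr_sum C f g h \<longleftrightarrow> (\<exists>A B. f \<in> hom C A B \<and> g \<in> hom C A B \<and> h \<in> hom C A B \<and>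
     (\<exists>Z s1 r1 s2 r2 u v. biproduct C B B Z s1 r1 s2 r2 \<and>
        u \<in> hom C A Z \<and> Cmp C r1 u = f \<and> Cmp C r2 u = g \<and>
        v \<in> hom C Z B \<and> Cmp C v s1 = Idt C B \<and> Cmp C v s2 = Idt C B \<and>
        h = Cmp C v u))"

definition hermitian :: "('o, 'm) starcat \<Rightarrow> 'm \<Rightarrow> bool" where
  "hermitian C a \<longleftrightarrow> a \<in> Arr C \<and> Dom C a = Cod C a \<and> Star C a = a"

text \<open>\<open>a \<le> b\<close> iff \<open>b - a = y\<^sup>* y\<close> for some \<open>y\<close>, i.e. \<open>b = a + y\<^sup>* y\<close>.\<close>
definition herm_le :: "('o, 'm) starcat \<Rightarrow> 'm \<Rightarrow> 'm \<Rightarrow> bool" where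
  "herm_le C a b \<longleftrightarrow> hermitian C a \<and> hermitian C b \<and> Dom C a = Dom C b \<and>
     (\<exists>y. y \<in> Arr C \<and> Dom C y = Dom C a \<and> arr_sum C a (Cmp C (Star C y) y) b)"

definition contraction :: "('o, 'm) starcat \<Rightarrow> 'm \<Rightarrow> bool" where
  "contraction C f \<longleftrightarrow> f \<in> Arr C \<and> herm_le C (Cmp C (Star C f) f) (Idt C (Dom C f))"

definition Con :: "('o, 'm) starcat \<Rightarrow> 'm set" where
  "Con C = {f. contraction C f}"

definition split_mono_in :: "('o, 'm) starcat \<Rightarrow> 'm set \<Rightarrow> 'm \<Rightarrow> bool" where
  "split_mono_in C M f \<longleftrightarrow> f \<in> M \<and>
     (\<exists>g \<in> M. Dom C g = Cod C f \<and> Cod C g = Dom C f \<and> Cmp C g f = Idt C (Dom C f))"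

definition jointly_monic_in ::
  "('o, 'm) starcat \<Rightarrow> 'm set \<Rightarrow> 'i set \<Rightarrow> 'o \<Rightarrow> ('i \<Rightarrow> 'm) \<Rightarrow> bool" where
  "jointly_monic_in C M I Y g \<longleftrightarrow> Y \<in> Ob C \<and> (\<forall>\<alpha> \<in> I. g \<alpha> \<in> M \<and> Dom C (g \<alpha>) = Y) \<and>
     (\<forall>h1 \<in> M. \<forall>h2 \<in> M. Cod C h1 = Y \<longrightarrow> Cod C h2 = Y \<longrightarrow> Dom C h1 = Dom C h2 \<longrightarrow>
        (\<forall>\<alpha> \<in> I. Cmp C (g \<alpha>) h1 = Cmp C (g \<alpha>) h2) \<longrightarrow> h1 = h2)"

definition equaliser_in :: "('o, 'm) starcat \<Rightarrow> 'm set \<Rightarrow> 'm \<Rightarrow> 'm \<Rightarrow> 'm \<Rightarrow> bool" where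
  "equaliser_in C M f g e \<longleftrightarrow> f \<in> M \<and> g \<in> M \<and> Dom C f = Dom C g \<and> Cod C f = Cod C g \<and>
     e \<in> M \<and> Cod C e = Dom C f \<and> Cmp C f e = Cmp C g e \<and>
     (\<forall>h \<in> M. Cod C h = Dom C f \<longrightarrow> Cmp C f h = Cmp C g h \<longrightarrow>
        (\<exists>!u. u \<in> M \<and> Dom C u = Dom C h \<and> Cod C u = Dom C e \<and> Cmp C e u = h))"

end

theory Submission
  imports Defs
begin

text \<open>
  Parallel arrows are added through biproducts. Axiom (R4) makes this addition cancellative,
  and isometric kernels make \<open>y\<^sup>\<dagger> y = 0\<close> force \<open>y = 0\<close>, also for sums of such squares.
  So if a contraction \<open>f\<close> has a contractive left inverse \<open>g\<close>, the defect equations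
  \<open>f\<^sup>\<dagger> f \<oplus> a = 1\<close> and \<open>g\<^sup>\<dagger> g \<oplus> b = 1\<close> give \<open>1 \<oplus> (f\<^sup>\<dagger> b f \<oplus> a) = 1\<close>, whence \<open>f\<^sup>\<dagger> f = 1\<close>.
  An isometry \<open>e\<close> preserves \<open>u\<^sup>\<dagger> u\<close>, so arrows factoring through an isometric equaliser
  of contractions factor through it by contractions. Equalising \<open>h \<pi>\<^sub>1\<close> and \<open>\<pi>\<^sub>2\<close> on
  \<open>A \<oplus> B\<close> yields a split epic contraction \<open>c\<close> onto \<open>A\<close> with \<open>h c\<close> contractive; this
  transfers joint monicity from contractions to all arrows. Finally an equaliser in \<open>Con(C)\<close>
  differs from the isometric one by a split monic contraction, hence is itself isometric.
\<close>

locale pre_hilbert_category =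
  fixes C :: "('o, 'm) starcat"
  assumes pre_hilbert: "pre_hilbert C"
begin

abbreviation comp (infixr "\<cdot>" 70) where "g \<cdot> f \<equiv> Cmp C g f"
abbreviation adjoint ("_\<^sup>\<dagger>" [1000] 999) where "f\<^sup>\<dagger> \<equiv> Star C f"

lemma star_category: "star_category C"
  using pre_hilbert by (simp add: pre_hilbert_def)

lemma has_zero_object: "\<exists>Z. zero_object C Z"
  using pre_hilbert by (simp add: pre_hilbert_def)

lemma has_orthonormal_biproduct:
  "X1 \<in> Ob C \<Longrightarrow> X2 \<in> Ob C \<Longrightarrow> \<exists>X s1 r1 s2 r2. orthonormal_biproduct C X1 X2 X s1 r1 s2 r2"
  using pre_hilbert by (simp add: pre_hilbert_def)

lemma has_isometric_kernel: "f \<in> Arr C \<Longrightarrow> \<exists>k. kernel C f k \<and> isometry C k"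
  using pre_hilbert by (simp add: pre_hilbert_def)

lemma diagonal_is_kernel:
  assumes "X \<in> Ob C" "orthonormal_biproduct C X X Z s1 r1 s2 r2" "d \<in> hom C X Z"
    and "r1 \<cdot> d = Idt C X" "r2 \<cdot> d = Idt C X"
  shows "\<exists>q. kernel C q d"
proof -
  have "\<forall>X \<in> Ob C. \<forall>Z s1 r1 s2 r2 d. orthonormal_biproduct C X X Z s1 r1 s2 r2 \<and> d \<in> hom C X Z \<and>
          r1 \<cdot> d = Idt C X \<and> r2 \<cdot> d = Idt C X \<longrightarrow> (\<exists>q. kernel C q d)"
    using pre_hilbert unfolding pre_hilbert_def by (elim conjE) assumption
  then show ?thesis using assms by blast
qed

lemma hom_iff [simp]: "f \<in> hom C A B \<longleftrightarrow> f \<in> Arr C \<and> Dom C f = A \<and> Cod C f = B"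
  by (simp add: hom_def)

lemma Dom_in_Ob [simp]: "f \<in> Arr C \<Longrightarrow> Dom C f \<in> Ob C"
  and Cod_in_Ob [simp]: "f \<in> Arr C \<Longrightarrow> Cod C f \<in> Ob C"
  using star_category unfolding star_category_def by blast+

lemma comp_in_hom: "\<lbrakk>f \<in> Arr C; g \<in> Arr C; Cod C f = Dom C g\<rbrakk> \<Longrightarrow> g \<cdot> f \<in> hom C (Dom C f) (Cod C g)"
  using star_category unfolding star_category_def by (metis hom_iff)

lemma
  assumes "f \<in> Arr C" "g \<in> Arr C" "Cod C f = Dom C g"
  shows comp_in_Arr [simp]: "g \<cdot> f \<in> Arr C"
    and Dom_comp [simp]: "Dom C (g \<cdot> f) = Dom C f"
    and Cod_comp [simp]: "Cod C (g \<cdot> f) = Cod C g"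
  using comp_in_hom[OF assms] by simp_all

lemma comp_assoc [simp]:
  "\<lbrakk>f \<in> Arr C; g \<in> Arr C; h \<in> Arr C; Cod C f = Dom C g; Cod C g = Dom C h\<rbrakk>
   \<Longrightarrow> (h \<cdot> g) \<cdot> f = h \<cdot> (g \<cdot> f)"
  using star_category unfolding star_category_def by metis

lemma comp_reassoc:
  "\<lbrakk>g \<cdot> f = h; f \<in> Arr C; g \<in> Arr C; x \<in> Arr C; Cod C x = Dom C f; Cod C f = Dom C g\<rbrakk>
   \<Longrightarrow> g \<cdot> (f \<cdot> x) = h \<cdot> x"
  by (metis comp_assoc)

lemma
  assumes "X \<in> Ob C"
  shows Idt_in_Arr [simp]: "Idt C X \<in> Arr C"
    and Dom_Idt [simp]: "Dom C (Idt C X) = X"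
    and Cod_Idt [simp]: "Cod C (Idt C X) = X"
    and Star_Idt [simp]: "(Idt C X)\<^sup>\<dagger> = Idt C X"
  using assms star_category unfolding star_category_def hom_def by blast+

lemma comp_Idt [simp]: "\<lbrakk>f \<in> Arr C; Dom C f = X\<rbrakk> \<Longrightarrow> f \<cdot> Idt C X = f"
  and Idt_comp [simp]: "\<lbrakk>f \<in> Arr C; Cod C f = X\<rbrakk> \<Longrightarrow> Idt C X \<cdot> f = f"
  using star_category unfolding star_category_def by blast+

lemma
  assumes "f \<in> Arr C"
  shows Star_in_Arr [simp]: "f\<^sup>\<dagger> \<in> Arr C"
    and Dom_Star [simp]: "Dom C (f\<^sup>\<dagger>) = Cod C f"
    and Cod_Star [simp]: "Cod C (f\<^sup>\<dagger>) = Dom C f"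
    and Star_Star [simp]: "(f\<^sup>\<dagger>)\<^sup>\<dagger> = f"
  using assms star_category unfolding star_category_def hom_def by blast+

lemma Star_comp [simp]: "\<lbrakk>f \<in> Arr C; g \<in> Arr C; Cod C f = Dom C g\<rbrakk> \<Longrightarrow> (g \<cdot> f)\<^sup>\<dagger> = f\<^sup>\<dagger> \<cdot> g\<^sup>\<dagger>"
  using star_category unfolding star_category_def by blast

lemma isometry_Idt: "X \<in> Ob C \<Longrightarrow> isometry C (Idt C X)"
  by (simp add: isometry_def)

lemma isometry_cancel_left:
  "\<lbrakk>isometry C e; x \<in> Arr C; Cod C x = Dom C e\<rbrakk> \<Longrightarrow> e\<^sup>\<dagger> \<cdot> (e \<cdot> x) = x"
  unfolding isometry_def by (metis Dom_Star Star_in_Arr comp_assoc Idt_comp)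

lemma isometry_comp:
  "\<lbrakk>isometry C e; isometry C u; Cod C u = Dom C e\<rbrakk> \<Longrightarrow> isometry C (e \<cdot> u)"
  using isometry_cancel_left[of e u] by (auto simp: isometry_def)

lemma zero_arr_in_Arr: "zero_arr C f \<Longrightarrow> f \<in> Arr C"
  by (simp add: zero_arr_def)

lemma zero_object_in_Ob: "zero_object C Z \<Longrightarrow> Z \<in> Ob C"
  by (simp add: zero_object_def)

lemma zero_object_hom_from_exists: "\<lbrakk>zero_object C Z; X \<in> Ob C\<rbrakk> \<Longrightarrow> \<exists>a. a \<in> hom C Z X"
  and zero_object_hom_to_exists: "\<lbrakk>zero_object C Z; X \<in> Ob C\<rbrakk> \<Longrightarrow> \<exists>a. a \<in> hom C X Z"
  unfolding zero_object_def by (meson ex1_implies_ex)+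

lemma zero_object_hom_from_unique:
  assumes "zero_object C Z" "a \<in> hom C Z X" "b \<in> hom C Z X"
  shows "a = b"
proof -
  have "\<exists>!f. f \<in> hom C Z X"
    using assms Cod_in_Ob unfolding zero_object_def hom_iff by blast
  then show ?thesis using assms(2,3) by blast
qed

lemma zero_object_hom_to_unique:
  assumes "zero_object C Z" "a \<in> hom C X Z" "b \<in> hom C X Z"
  shows "a = b"
proof -
  have "\<exists>!f. f \<in> hom C X Z"
    using assms Dom_in_Ob unfolding zero_object_def hom_iff by blast
  then show ?thesis using assms(2,3) by blast
qed

lemma zero_arrI: "\<lbrakk>zero_object C Z; u \<in> hom C A Z; v \<in> hom C Z B\<rbrakk> \<Longrightarrow> zero_arr C (v \<cdot> u)"
  unfolding zero_arr_def by (intro conjI exI[of _ Z] exI[of _ u] exI[of _ v]) auto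

lemma zero_arrE:
  assumes "zero_arr C f"
  obtains Z u v where "zero_object C Z" "u \<in> hom C (Dom C f) Z" "v \<in> hom C Z (Cod C f)" "f = v \<cdot> u"
  using assms unfolding zero_arr_def by blast

lemma zero_arr_unique:
  assumes f: "zero_arr C f" and g: "zero_arr C g"
    and same_hom: "Dom C g = Dom C f" "Cod C g = Cod C f"
  shows "f = g"
proof -
  obtain Z u v where Z: "zero_object C Z" "u \<in> hom C (Dom C f) Z" "v \<in> hom C Z (Cod C f)"
    and f_eq: "f = v \<cdot> u"
    using f by (rule zero_arrE)
  obtain Z' u' v' where Z': "zero_object C Z'" "u' \<in> hom C (Dom C f) Z'" "v' \<in> hom C Z' (Cod C f)"
    and g_eq: "g = v' \<cdot> u'"
    using zero_arrE[OF g] unfolding same_hom by blast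
  obtain t where t: "t \<in> hom C Z Z'"
    using zero_object_hom_from_exists[OF Z(1) zero_object_in_Ob[OF Z'(1)]] by blast
  have u'_eq: "u' = t \<cdot> u"
    by (rule zero_object_hom_to_unique[OF Z'(1) Z'(2)]) (use Z(2) t in simp)
  have v_eq: "v = v' \<cdot> t"
    by (rule zero_object_hom_from_unique[OF Z(1) Z(3)]) (use Z'(3) t in simp)
  have "f = (v' \<cdot> t) \<cdot> u" by (simp only: f_eq v_eq)
  also have "\<dots> = v' \<cdot> (t \<cdot> u)" by (rule comp_assoc) (use Z Z' t in simp_all)
  also have "\<dots> = g" by (simp only: g_eq u'_eq)
  finally show ?thesis .
qed

lemma zero_arr_exists:
  assumes "A \<in> Ob C" "B \<in> Ob C"
  shows "\<exists>f. f \<in> hom C A B \<and> zero_arr C f"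
proof -
  obtain Z where Z: "zero_object C Z" using has_zero_object by blast
  obtain u v where u: "u \<in> hom C A Z" and v: "v \<in> hom C Z B"
    using zero_object_hom_to_exists[OF Z assms(1)] zero_object_hom_from_exists[OF Z assms(2)] by blast
  have "v \<cdot> u \<in> hom C A B" using u v by simp
  then show ?thesis using zero_arrI[OF Z u v] by blast
qed

definition zero_hom :: "'o \<Rightarrow> 'o \<Rightarrow> 'm" where
  "zero_hom A B = (SOME f. f \<in> hom C A B \<and> zero_arr C f)"

lemma
  assumes "A \<in> Ob C" "B \<in> Ob C"
  shows zero_hom_in_Arr [simp]: "zero_hom A B \<in> Arr C"
    and Dom_zero_hom [simp]: "Dom C (zero_hom A B) = A"
    and Cod_zero_hom [simp]: "Cod C (zero_hom A B) = B"
    and zero_arr_zero_hom [simp]: "zero_arr C (zero_hom A B)"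
  using someI_ex[OF zero_arr_exists[OF assms]] unfolding zero_hom_def by auto

lemma zero_hom_in_hom: "f \<in> hom C A B \<Longrightarrow> zero_hom A B \<in> hom C A B"
  using Dom_in_Ob[of f] Cod_in_Ob[of f] by simp

lemma zero_arr_eq_zero_hom: "zero_arr C f \<Longrightarrow> f = zero_hom (Dom C f) (Cod C f)"
  by (rule zero_arr_unique) (simp_all add: zero_arr_in_Arr)

lemma comp_zero_arr:
  assumes f: "zero_arr C f" and g: "g \<in> Arr C" "Cod C f = Dom C g"
  shows "zero_arr C (g \<cdot> f)"
proof -
  obtain Z u v where Z: "zero_object C Z" "u \<in> hom C (Dom C f) Z" "v \<in> hom C Z (Cod C f)"
    and f_eq: "f = v \<cdot> u"
    using f by (rule zero_arrE)
  have "g \<cdot> f = (g \<cdot> v) \<cdot> u"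
    unfolding f_eq by (rule comp_assoc[symmetric]) (use Z g in simp_all)
  moreover have "zero_arr C ((g \<cdot> v) \<cdot> u)"
    by (rule zero_arrI[OF Z(1,2)]) (use Z g in simp)
  ultimately show ?thesis by simp
qed

lemma zero_arr_comp:
  assumes f: "zero_arr C f" and g: "g \<in> Arr C" "Cod C g = Dom C f"
  shows "zero_arr C (f \<cdot> g)"
proof -
  obtain Z u v where Z: "zero_object C Z" "u \<in> hom C (Dom C f) Z" "v \<in> hom C Z (Cod C f)"
    and f_eq: "f = v \<cdot> u"
    using f by (rule zero_arrE)
  have "f \<cdot> g = v \<cdot> (u \<cdot> g)"
    unfolding f_eq by (rule comp_assoc) (use Z g in simp_all)
  moreover have "zero_arr C (v \<cdot> (u \<cdot> g))"
    by (rule zero_arrI[OF Z(1) _ Z(3)]) (use Z g in simp)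
  ultimately show ?thesis by simp
qed

lemma zero_arr_Star:
  assumes f: "zero_arr C f"
  shows "zero_arr C (f\<^sup>\<dagger>)"
proof -
  obtain Z u v where Z: "zero_object C Z" "u \<in> hom C (Dom C f) Z" "v \<in> hom C Z (Cod C f)"
    and f_eq: "f = v \<cdot> u"
    using f by (rule zero_arrE)
  have "f\<^sup>\<dagger> = u\<^sup>\<dagger> \<cdot> v\<^sup>\<dagger>"
    unfolding f_eq by (rule Star_comp) (use Z in simp_all)
  moreover have "zero_arr C (u\<^sup>\<dagger> \<cdot> v\<^sup>\<dagger>)"
    by (rule zero_arrI[OF Z(1)]) (use Z in simp_all)
  ultimately show ?thesis by simp
qed

lemma zero_hom_comp [simp]: "\<lbrakk>f \<in> Arr C; Cod C f = A; B \<in> Ob C\<rbrakk> \<Longrightarrow> zero_hom A B \<cdot> f = zero_hom (Dom C f) B"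
  using zero_arr_eq_zero_hom[OF zero_arr_comp[of "zero_hom A B" f]] by auto

lemma comp_zero_hom [simp]: "\<lbrakk>g \<in> Arr C; Dom C g = B; A \<in> Ob C\<rbrakk> \<Longrightarrow> g \<cdot> zero_hom A B = zero_hom A (Cod C g)"
  using zero_arr_eq_zero_hom[OF comp_zero_arr[of "zero_hom A B" g]] by auto

lemma kernelD:
  assumes "kernel C f k"
  shows "f \<in> Arr C" "k \<in> Arr C" "Cod C k = Dom C f" "zero_arr C (f \<cdot> k)"
  using assms unfolding kernel_def by blast+

lemma kernel_factor:
  assumes "kernel C f k" "h \<in> Arr C" "Cod C h = Dom C f" "zero_arr C (f \<cdot> h)"
  obtains u where "u \<in> hom C (Dom C h) (Dom C k)" "k \<cdot> u = h"
proof -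
  have "\<exists>!u. u \<in> hom C (Dom C h) (Dom C k) \<and> k \<cdot> u = h"
    using assms unfolding kernel_def by blast
  then show ?thesis using that by blast
qed

lemma product_tuple_exists:
  "\<lbrakk>is_product C X1 X2 P p1 p2; f1 \<in> hom C W X1; f2 \<in> hom C W X2\<rbrakk>
   \<Longrightarrow> \<exists>u. u \<in> hom C W P \<and> p1 \<cdot> u = f1 \<and> p2 \<cdot> u = f2"
  unfolding is_product_def by metis

lemma product_arr_eqI:
  assumes P: "is_product C X1 X2 P p1 p2" and "a \<in> hom C W P" "b \<in> hom C W P"
    and "p1 \<cdot> a = p1 \<cdot> b" "p2 \<cdot> a = p2 \<cdot> b"
  shows "a = b"
proof -
  have "p1 \<cdot> a \<in> hom C W X1" "p2 \<cdot> a \<in> hom C W X2"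
    using assms unfolding is_product_def by auto
  then show ?thesis using assms unfolding is_product_def by metis
qed

lemma coproduct_cotuple_exists:
  "\<lbrakk>is_coproduct C X1 X2 P i1 i2; f1 \<in> hom C X1 W; f2 \<in> hom C X2 W\<rbrakk>
   \<Longrightarrow> \<exists>u. u \<in> hom C P W \<and> u \<cdot> i1 = f1 \<and> u \<cdot> i2 = f2"
  unfolding is_coproduct_def by metis

lemma coproduct_arr_eqI:
  assumes P: "is_coproduct C X1 X2 P i1 i2" and "a \<in> hom C P W" "b \<in> hom C P W"
    and "a \<cdot> i1 = b \<cdot> i1" "a \<cdot> i2 = b \<cdot> i2"
  shows "a = b"
proof -
  have "a \<cdot> i1 \<in> hom C X1 W" "a \<cdot> i2 \<in> hom C X2 W"
    using assms unfolding is_coproduct_def by auto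
  then show ?thesis using assms unfolding is_coproduct_def by metis
qed

lemma product_swap: "is_product C X1 X2 P p1 p2 \<Longrightarrow> is_product C X2 X1 P p2 p1"
  unfolding is_product_def by (metis (no_types, lifting))

lemma coproduct_swap: "is_coproduct C X1 X2 P i1 i2 \<Longrightarrow> is_coproduct C X2 X1 P i2 i1"
  unfolding is_coproduct_def by (metis (no_types, lifting))

lemma biproduct_swap: "biproduct C X1 X2 X s1 r1 s2 r2 \<Longrightarrow> biproduct C X2 X1 X s2 r2 s1 r1"
  unfolding biproduct_def using product_swap coproduct_swap by blast

context
  fixes X1 X2 X s1 r1 s2 r2
  assumes biproduct: "biproduct C X1 X2 X s1 r1 s2 r2"
begin

lemma biproduct_is_product: "is_product C X1 X2 X r1 r2"
  and biproduct_is_coproduct: "is_coproduct C X1 X2 X s1 s2"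
  using biproduct unfolding biproduct_def by blast+

lemma biproduct_arrs:
  "s1 \<in> Arr C" "Dom C s1 = X1" "Cod C s1 = X" "r1 \<in> Arr C" "Dom C r1 = X" "Cod C r1 = X1"
  "s2 \<in> Arr C" "Dom C s2 = X2" "Cod C s2 = X" "r2 \<in> Arr C" "Dom C r2 = X" "Cod C r2 = X2"
  using biproduct unfolding biproduct_def by simp_all

lemma biproduct_Ob: "X1 \<in> Ob C" "X2 \<in> Ob C" "X \<in> Ob C"
  using biproduct_arrs by (metis Dom_in_Ob)+

lemma biproduct_comps:
  "r1 \<cdot> s1 = Idt C X1" "r2 \<cdot> s2 = Idt C X2" "r2 \<cdot> s1 = zero_hom X1 X2" "r1 \<cdot> s2 = zero_hom X2 X1"
  using biproduct biproduct_arrs unfolding biproduct_def by (auto dest: zero_arr_eq_zero_hom)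

lemma biproduct_comps_assoc:
  assumes "x \<in> Arr C"
  shows "Cod C x = X1 \<Longrightarrow> r1 \<cdot> (s1 \<cdot> x) = x" "Cod C x = X2 \<Longrightarrow> r2 \<cdot> (s2 \<cdot> x) = x"
    "Cod C x = X1 \<Longrightarrow> r2 \<cdot> (s1 \<cdot> x) = zero_hom (Dom C x) X2"
    "Cod C x = X2 \<Longrightarrow> r1 \<cdot> (s2 \<cdot> x) = zero_hom (Dom C x) X1"
  using assms biproduct_arrs biproduct_Ob by (simp_all flip: comp_assoc add: biproduct_comps)

end

lemmas biproduct_simps = biproduct_arrs biproduct_Ob biproduct_comps biproduct_comps_assoc

lemma orthonormal_biproduct_biproduct:
  "orthonormal_biproduct C X1 X2 X s1 r1 s2 r2 \<Longrightarrow> biproduct C X1 X2 X s1 r1 s2 r2"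
  unfolding orthonormal_biproduct_def by blast

section \<open>Addition of parallel arrows\<close>

lemma arr_sum_independent_of_biproduct:
  assumes b: "biproduct C B B Z s1 r1 s2 r2" and u: "u \<in> hom C A Z"
    and v: "v \<in> hom C Z B" "v \<cdot> s1 = Idt C B" "v \<cdot> s2 = Idt C B"
    and b': "biproduct C B B Z' s1' r1' s2' r2'"
    and u': "u' \<in> hom C A Z'" "r1' \<cdot> u' = r1 \<cdot> u" "r2' \<cdot> u' = r2 \<cdot> u"
    and v': "v' \<in> hom C Z' B" "v' \<cdot> s1' = Idt C B" "v' \<cdot> s2' = Idt C B"
  shows "v \<cdot> u = v' \<cdot> u'"
proof -
  note B = biproduct_simps[OF b] and B' = biproduct_simps[OF b']
  obtain p where p: "p \<in> hom C Z Z'" "p \<cdot> s1 = s1'" "p \<cdot> s2 = s2'"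
    using coproduct_cotuple_exists[OF biproduct_is_coproduct[OF b], of s1' Z' s2'] B' by auto
  have r1p: "r1' \<cdot> p = r1"
    by (rule coproduct_arr_eqI[OF biproduct_is_coproduct[OF b], of _ B])
      (use p B B' comp_reassoc[OF p(2)] in simp_all)
  have r2p: "r2' \<cdot> p = r2"
    by (rule coproduct_arr_eqI[OF biproduct_is_coproduct[OF b], of _ B])
      (use p B B' comp_reassoc[OF p(3)] in simp_all)
  have vp: "v' \<cdot> p = v"
    by (rule coproduct_arr_eqI[OF biproduct_is_coproduct[OF b], of _ B])
      (use p B B' v v' comp_reassoc[OF p(2)] comp_reassoc[OF p(3)] in simp_all)
  have pu: "p \<cdot> u = u'"
    by (rule product_arr_eqI[OF biproduct_is_product[OF b'], of _ A])
      (use p B B' u u' comp_reassoc[OF r1p] comp_reassoc[OF r2p] in simp_all)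
  have "v \<cdot> u = (v' \<cdot> p) \<cdot> u" by (simp only: vp)
  also have "\<dots> = v' \<cdot> (p \<cdot> u)" by (rule comp_assoc) (use p u v' in simp_all)
  finally show ?thesis by (simp only: pu)
qed

lemma arr_sum_unique:
  assumes "arr_sum C f g h" "arr_sum C f g h'"
  shows "h = h'"
proof -
  obtain A B Z s1 r1 s2 r2 u v where f: "f \<in> hom C A B" and
    h: "biproduct C B B Z s1 r1 s2 r2" "u \<in> hom C A Z" "v \<in> hom C Z B"
       "v \<cdot> s1 = Idt C B" "v \<cdot> s2 = Idt C B" "r1 \<cdot> u = f" "r2 \<cdot> u = g" "h = v \<cdot> u"
    using assms(1) unfolding arr_sum_def by blast
  obtain Z' s1' r1' s2' r2' u' v' where
    h': "biproduct C B B Z' s1' r1' s2' r2'" "u' \<in> hom C A Z'" "v' \<in> hom C Z' B"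
       "v' \<cdot> s1' = Idt C B" "v' \<cdot> s2' = Idt C B" "r1' \<cdot> u' = f" "r2' \<cdot> u' = g" "h' = v' \<cdot> u'"
    using assms(2) f unfolding arr_sum_def hom_iff by metis
  show ?thesis
    using arr_sum_independent_of_biproduct[OF h(1-5) h'(1,2) _ _ h'(3-5)] h h' by simp
qed

lemma codiagonal_exists:
  assumes "B \<in> Ob C"
  shows "\<exists>Z s1 r1 s2 r2 v. orthonormal_biproduct C B B Z s1 r1 s2 r2 \<and>
           v \<in> hom C Z B \<and> v \<cdot> s1 = Idt C B \<and> v \<cdot> s2 = Idt C B"
proof -
  obtain Z s1 r1 s2 r2 where o: "orthonormal_biproduct C B B Z s1 r1 s2 r2"
    using has_orthonormal_biproduct[OF assms assms] by blast
  moreover obtain v where "v \<in> hom C Z B" "v \<cdot> s1 = Idt C B" "v \<cdot> s2 = Idt C B"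
    using coproduct_cotuple_exists[OF biproduct_is_coproduct[OF orthonormal_biproduct_biproduct[OF o]]]
      assms by (metis Idt_in_Arr Dom_Idt Cod_Idt hom_iff)
  ultimately show ?thesis by blast
qed

lemma arr_sum_exists:
  assumes f: "f \<in> hom C A B" and g: "g \<in> hom C A B"
  shows "\<exists>h. arr_sum C f g h"
proof -
  obtain Z s1 r1 s2 r2 v where o: "orthonormal_biproduct C B B Z s1 r1 s2 r2"
    and v: "v \<in> hom C Z B" "v \<cdot> s1 = Idt C B" "v \<cdot> s2 = Idt C B"
    using codiagonal_exists f by (metis Cod_in_Ob hom_iff)
  note b = orthonormal_biproduct_biproduct[OF o]
  obtain u where u: "u \<in> hom C A Z" "r1 \<cdot> u = f" "r2 \<cdot> u = g"
    using product_tuple_exists[OF biproduct_is_product[OF b] f g] by blast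
  have "v \<cdot> u \<in> hom C A B" using u v by simp
  then have "arr_sum C f g (v \<cdot> u)" unfolding arr_sum_def using f g b u v by blast
  then show ?thesis by blast
qed

definition add (infixl "\<oplus>" 65) where
  "f \<oplus> g = (THE h. arr_sum C f g h)"

lemma add_eqI: "arr_sum C f g h \<Longrightarrow> f \<oplus> g = h"
  unfolding add_def using arr_sum_unique by blast

lemma arr_sum_add: "\<lbrakk>f \<in> hom C A B; g \<in> hom C A B\<rbrakk> \<Longrightarrow> arr_sum C f g (f \<oplus> g)"
  using arr_sum_exists add_eqI by metis

lemma add_in_hom: "\<lbrakk>f \<in> hom C A B; g \<in> hom C A B\<rbrakk> \<Longrightarrow> f \<oplus> g \<in> hom C A B"
  using arr_sum_add unfolding arr_sum_def by (metis hom_iff)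

lemma
  assumes "f \<in> Arr C" "g \<in> Arr C" "Dom C f = Dom C g" "Cod C f = Cod C g"
  shows add_in_Arr [simp]: "f \<oplus> g \<in> Arr C"
    and Dom_add [simp]: "Dom C (f \<oplus> g) = Dom C f"
    and Cod_add [simp]: "Cod C (f \<oplus> g) = Cod C f"
  using add_in_hom[of f "Dom C f" "Cod C f" g] assms by simp_all

lemma add_via_biproduct:
  assumes b: "biproduct C B B Z s1 r1 s2 r2" and u: "u \<in> hom C A Z"
    and v: "v \<in> hom C Z B" "v \<cdot> s1 = Idt C B" "v \<cdot> s2 = Idt C B"
  shows "r1 \<cdot> u \<oplus> r2 \<cdot> u = v \<cdot> u"
proof (rule add_eqI)
  have "r1 \<cdot> u \<in> hom C A B" "r2 \<cdot> u \<in> hom C A B" "v \<cdot> u \<in> hom C A B"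
    using u v biproduct_simps[OF b] by simp_all
  then show "arr_sum C (r1 \<cdot> u) (r2 \<cdot> u) (v \<cdot> u)"
    unfolding arr_sum_def using b u v by blast
qed

lemma add_commute:
  assumes f: "f \<in> hom C A B" and g: "g \<in> hom C A B"
  shows "f \<oplus> g = g \<oplus> f"
proof -
  obtain Z s1 r1 s2 r2 v where o: "orthonormal_biproduct C B B Z s1 r1 s2 r2"
    and v: "v \<in> hom C Z B" "v \<cdot> s1 = Idt C B" "v \<cdot> s2 = Idt C B"
    using codiagonal_exists f by (metis Cod_in_Ob hom_iff)
  note b = orthonormal_biproduct_biproduct[OF o]
  obtain u where u: "u \<in> hom C A Z" "r1 \<cdot> u = f" "r2 \<cdot> u = g"
    using product_tuple_exists[OF biproduct_is_product[OF b] f g] by blast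
  show ?thesis
    using add_via_biproduct[OF b u(1) v] add_via_biproduct[OF biproduct_swap[OF b] u(1) v(1,3,2)] u
    by simp
qed

lemma zero_add:
  assumes f: "f \<in> hom C A B"
  shows "zero_hom A B \<oplus> f = f"
proof -
  obtain Z s1 r1 s2 r2 v where o: "orthonormal_biproduct C B B Z s1 r1 s2 r2"
    and v: "v \<in> hom C Z B" "v \<cdot> s1 = Idt C B" "v \<cdot> s2 = Idt C B"
    using codiagonal_exists f by (metis Cod_in_Ob hom_iff)
  note b = orthonormal_biproduct_biproduct[OF o]
  have "s2 \<cdot> f \<in> hom C A Z" using f biproduct_simps[OF b] by simp
  from add_via_biproduct[OF b this v] show ?thesis
    using f v biproduct_simps[OF b] comp_reassoc[OF v(3)] by simp
qed

lemma add_zero: "f \<in> hom C A B \<Longrightarrow> f \<oplus> zero_hom A B = f"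
  using zero_add add_commute zero_hom_in_hom by metis

lemma add_comp_distrib:
  assumes f: "f \<in> hom C A B" and g: "g \<in> hom C A B" and k: "k \<in> hom C A' A"
  shows "(f \<oplus> g) \<cdot> k = f \<cdot> k \<oplus> g \<cdot> k"
proof -
  obtain Z s1 r1 s2 r2 v where o: "orthonormal_biproduct C B B Z s1 r1 s2 r2"
    and v: "v \<in> hom C Z B" "v \<cdot> s1 = Idt C B" "v \<cdot> s2 = Idt C B"
    using codiagonal_exists f by (metis Cod_in_Ob hom_iff)
  note b = orthonormal_biproduct_biproduct[OF o]
  obtain u where u: "u \<in> hom C A Z" "r1 \<cdot> u = f" "r2 \<cdot> u = g"
    using product_tuple_exists[OF biproduct_is_product[OF b] f g] by blast
  have "u \<cdot> k \<in> hom C A' Z" using u k by simp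
  from add_via_biproduct[OF b this v] show ?thesis
    using add_via_biproduct[OF b u(1) v] u k v biproduct_simps[OF b]
      comp_reassoc[OF u(2)] comp_reassoc[OF u(3)] by simp
qed

lemma comp_add_distrib:
  assumes f: "f \<in> hom C A B" and g: "g \<in> hom C A B" and h: "h \<in> hom C B B'"
  shows "h \<cdot> (f \<oplus> g) = h \<cdot> f \<oplus> h \<cdot> g"
proof -
  obtain Z s1 r1 s2 r2 v where o: "orthonormal_biproduct C B B Z s1 r1 s2 r2"
    and v: "v \<in> hom C Z B" "v \<cdot> s1 = Idt C B" "v \<cdot> s2 = Idt C B"
    using codiagonal_exists f by (metis Cod_in_Ob hom_iff)
  obtain Z' s1' r1' s2' r2' v' where o': "orthonormal_biproduct C B' B' Z' s1' r1' s2' r2'"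
    and v': "v' \<in> hom C Z' B'" "v' \<cdot> s1' = Idt C B'" "v' \<cdot> s2' = Idt C B'"
    using codiagonal_exists h by (metis Cod_in_Ob hom_iff)
  note b = orthonormal_biproduct_biproduct[OF o] and b' = orthonormal_biproduct_biproduct[OF o']
  note B = biproduct_simps[OF b] and B' = biproduct_simps[OF b']
  note coprod = biproduct_is_coproduct[OF b]
  obtain u where u: "u \<in> hom C A Z" "r1 \<cdot> u = f" "r2 \<cdot> u = g"
    using product_tuple_exists[OF biproduct_is_product[OF b] f g] by blast
  obtain H where H: "H \<in> hom C Z Z'" "H \<cdot> s1 = s1' \<cdot> h" "H \<cdot> s2 = s2' \<cdot> h"
    using coproduct_cotuple_exists[OF coprod, of "s1' \<cdot> h" Z' "s2' \<cdot> h"] B' h by auto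
  have r1H: "r1' \<cdot> H = h \<cdot> r1"
    by (rule coproduct_arr_eqI[OF coprod, of _ B'])
      (use H h B B' comp_reassoc[OF H(2)] comp_reassoc[OF H(3)] in simp_all)
  have r2H: "r2' \<cdot> H = h \<cdot> r2"
    by (rule coproduct_arr_eqI[OF coprod, of _ B'])
      (use H h B B' comp_reassoc[OF H(2)] comp_reassoc[OF H(3)] in simp_all)
  have vH: "v' \<cdot> H = h \<cdot> v"
    by (rule coproduct_arr_eqI[OF coprod, of _ B'])
      (use H h B B' v v' comp_reassoc[OF H(2)] comp_reassoc[OF H(3)]
         comp_reassoc[OF v'(2)] comp_reassoc[OF v'(3)] comp_reassoc[OF v(2)] comp_reassoc[OF v(3)]
       in simp_all)
  have "H \<cdot> u \<in> hom C A Z'" using u H by simp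
  from add_via_biproduct[OF b' this v'] show ?thesis
    using add_via_biproduct[OF b u(1) v] u H h v v' B B' comp_reassoc[OF r1H] comp_reassoc[OF r2H]
      comp_reassoc[OF vH] by simp
qed

lemma add_interchange:
  assumes a: "a \<in> hom C A B" and b: "b \<in> hom C A B" and c: "c \<in> hom C A B" and d: "d \<in> hom C A B"
  shows "(a \<oplus> b) \<oplus> (c \<oplus> d) = (a \<oplus> c) \<oplus> (b \<oplus> d)"
proof -
  obtain Z s1 r1 s2 r2 v where o: "orthonormal_biproduct C B B Z s1 r1 s2 r2"
    and v: "v \<in> hom C Z B" "v \<cdot> s1 = Idt C B" "v \<cdot> s2 = Idt C B"
    using codiagonal_exists a by (metis Cod_in_Ob hom_iff)
  note bp = orthonormal_biproduct_biproduct[OF o]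
  note B = biproduct_simps[OF bp]
  obtain x where x: "x \<in> hom C A Z" "r1 \<cdot> x = a" "r2 \<cdot> x = c"
    using product_tuple_exists[OF biproduct_is_product[OF bp] a c] by blast
  obtain y where y: "y \<in> hom C A Z" "r1 \<cdot> y = b" "r2 \<cdot> y = d"
    using product_tuple_exists[OF biproduct_is_product[OF bp] b d] by blast
  have "r1 \<cdot> (x \<oplus> y) = a \<oplus> b" "r2 \<cdot> (x \<oplus> y) = c \<oplus> d"
    using comp_add_distrib[OF x(1) y(1), of r1 B] comp_add_distrib[OF x(1) y(1), of r2 B] B x y
    by simp_all
  moreover have "v \<cdot> (x \<oplus> y) = (a \<oplus> c) \<oplus> (b \<oplus> d)"
    using comp_add_distrib[OF x(1) y(1) v(1)] add_via_biproduct[OF bp x(1) v]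
      add_via_biproduct[OF bp y(1) v] x y by simp
  ultimately show ?thesis
    using add_via_biproduct[OF bp add_in_hom[OF x(1) y(1)] v] by simp
qed

lemma add_assoc:
  assumes a: "a \<in> hom C A B" and b: "b \<in> hom C A B" and c: "c \<in> hom C A B"
  shows "(a \<oplus> b) \<oplus> c = a \<oplus> (b \<oplus> c)"
proof -
  from add_interchange[OF a b zero_hom_in_hom[OF a] c] show ?thesis
    using zero_add[OF c] add_zero[OF a] by simp
qed

lemma biproduct_add_Idt:
  assumes bp: "biproduct C X1 X2 X s1 r1 s2 r2"
  shows "s1 \<cdot> r1 \<oplus> s2 \<cdot> r2 = Idt C X"
proof (rule product_arr_eqI[OF biproduct_is_product[OF bp], of _ X])
  note B = biproduct_simps[OF bp]
  have h: "s1 \<cdot> r1 \<in> hom C X X" "s2 \<cdot> r2 \<in> hom C X X" and r: "r1 \<in> hom C X X1" "r2 \<in> hom C X X2"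
    using B by simp_all
  show "s1 \<cdot> r1 \<oplus> s2 \<cdot> r2 \<in> hom C X X" "Idt C X \<in> hom C X X"
    using add_in_hom[OF h] B by simp_all
  show "r1 \<cdot> (s1 \<cdot> r1 \<oplus> s2 \<cdot> r2) = r1 \<cdot> Idt C X"
    using comp_add_distrib[OF h r(1)] B add_zero[OF r(1)] by simp
  show "r2 \<cdot> (s1 \<cdot> r1 \<oplus> s2 \<cdot> r2) = r2 \<cdot> Idt C X"
    using comp_add_distrib[OF h r(2)] B zero_add[OF r(2)] by simp
qed

text \<open>This is where axiom (R4) enters: an arrow \<open>q\<close> with the diagonal of \<open>B \<oplus> B\<close> as kernel
  vanishes on \<open>u\<close> exactly when the two components of \<open>u\<close> agree.\<close>

lemma equality_detector_exists:
  assumes B: "B \<in> Ob C"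
  obtains Z s1 r1 s2 r2 q where "orthonormal_biproduct C B B Z s1 r1 s2 r2" "q \<in> Arr C" "Dom C q = Z"
    "\<And>u. \<lbrakk>u \<in> Arr C; Cod C u = Z\<rbrakk> \<Longrightarrow> zero_arr C (q \<cdot> u) \<longleftrightarrow> r1 \<cdot> u = r2 \<cdot> u"
proof -
  obtain Z s1 r1 s2 r2 where o: "orthonormal_biproduct C B B Z s1 r1 s2 r2"
    using has_orthonormal_biproduct[OF B B] by blast
  note bp = orthonormal_biproduct_biproduct[OF o]
  note BP = biproduct_simps[OF bp]
  obtain d where d: "d \<in> hom C B Z" "r1 \<cdot> d = Idt C B" "r2 \<cdot> d = Idt C B"
    using product_tuple_exists[OF biproduct_is_product[OF bp], of "Idt C B" B "Idt C B"] B by auto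
  obtain q where q: "kernel C q d" using diagonal_is_kernel[OF B o d] by blast
  have q_arr: "q \<in> Arr C" "Dom C q = Z" using kernelD[OF q] d by simp_all
  have "zero_arr C (q \<cdot> u) \<longleftrightarrow> r1 \<cdot> u = r2 \<cdot> u" if u: "u \<in> Arr C" "Cod C u = Z" for u
  proof
    assume "zero_arr C (q \<cdot> u)"
    then obtain t where t: "t \<in> hom C (Dom C u) B" "d \<cdot> t = u"
      using kernel_factor[OF q u(1)] u q_arr d by auto
    have "r1 \<cdot> u = t" "r2 \<cdot> u = t"
      using comp_reassoc[OF d(2), of t] comp_reassoc[OF d(3), of t] t d BP by simp_all
    then show "r1 \<cdot> u = r2 \<cdot> u" by simp
  next
    assume e: "r1 \<cdot> u = r2 \<cdot> u"
    have t: "r1 \<cdot> u \<in> hom C (Dom C u) B" using u BP by simp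
    have "d \<cdot> (r1 \<cdot> u) = u"
      by (rule product_arr_eqI[OF biproduct_is_product[OF bp], of _ "Dom C u"])
        (use t d u BP e comp_reassoc[OF d(2)] comp_reassoc[OF d(3)] in simp_all)
    moreover have "zero_arr C ((q \<cdot> d) \<cdot> (r1 \<cdot> u))"
      by (rule zero_arr_comp[OF kernelD(4)[OF q]]) (use t d q_arr in simp_all)
    ultimately show "zero_arr C (q \<cdot> u)" using t d q_arr by simp
  qed
  then show ?thesis using that[OF o q_arr] by blast
qed

lemma add_right_cancel:
  assumes a: "a \<in> hom C A B" and b: "b \<in> hom C A B" and c: "c \<in> hom C A B"
    and eq: "a \<oplus> c = b \<oplus> c"
  shows "a = b"
proof -
  have B: "B \<in> Ob C" using a Cod_in_Ob by auto
  obtain Z s1 r1 s2 r2 q where o: "orthonormal_biproduct C B B Z s1 r1 s2 r2"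
    and q: "q \<in> Arr C" "Dom C q = Z"
    and detect: "\<And>u. \<lbrakk>u \<in> Arr C; Cod C u = Z\<rbrakk> \<Longrightarrow> zero_arr C (q \<cdot> u) \<longleftrightarrow> r1 \<cdot> u = r2 \<cdot> u"
    using equality_detector_exists[OF B] by blast
  note bp = orthonormal_biproduct_biproduct[OF o]
  note BP = biproduct_simps[OF bp]
  obtain u where u: "u \<in> hom C A Z" "r1 \<cdot> u = a" "r2 \<cdot> u = b"
    using product_tuple_exists[OF biproduct_is_product[OF bp] a b] by blast
  obtain w where w: "w \<in> hom C A Z" "r1 \<cdot> w = c" "r2 \<cdot> w = c"
    using product_tuple_exists[OF biproduct_is_product[OF bp] c c] by blast
  have q_hom: "q \<in> hom C Z (Cod C q)" using q by simp
  txt \<open>\<open>q\<close> kills \<open>w\<close> and the sum \<open>u \<oplus> w\<close>, whose components are \<open>a \<oplus> c = b \<oplus> c\<close>;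
    hence it kills \<open>u\<close>.\<close>
  have "r1 \<cdot> (u \<oplus> w) = r2 \<cdot> (u \<oplus> w)"
    using comp_add_distrib[OF u(1) w(1), of r1 B] comp_add_distrib[OF u(1) w(1), of r2 B] u w BP eq
    by simp
  then have "zero_arr C (q \<cdot> (u \<oplus> w))" using detect u w by simp
  moreover have "q \<cdot> w = zero_hom A (Cod C q)"
    using detect[of w] w q zero_arr_eq_zero_hom[of "q \<cdot> w"] by simp
  ultimately have "zero_arr C (q \<cdot> u)"
    using comp_add_distrib[OF u(1) w(1) q_hom] add_zero[of "q \<cdot> u" A "Cod C q"] u q by simp
  then show "a = b" using detect u by simp
qed

lemma add_eq_left_imp_zero:
  assumes a: "a \<in> hom C A B" and c: "c \<in> hom C A B" and eq: "a \<oplus> c = a"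
  shows "c = zero_hom A B"
proof (rule add_right_cancel[OF c zero_hom_in_hom[OF a] a])
  show "c \<oplus> a = zero_hom A B \<oplus> a"
    using add_commute[OF a c] zero_add[OF a] eq by simp
qed

section \<open>Positivity and contractions\<close>

lemma Star_comp_self_zeroD:
  assumes y: "y \<in> Arr C" and z: "zero_arr C (y\<^sup>\<dagger> \<cdot> y)"
  shows "zero_arr C y"
proof -
  obtain k where k: "kernel C (y\<^sup>\<dagger>) k" and iso: "isometry C k"
    using has_isometric_kernel[of "y\<^sup>\<dagger>"] y by auto
  have k_arr: "k \<in> Arr C" "Cod C k = Cod C y"
    using kernelD[OF k] y by simp_all
  obtain u where u: "u \<in> hom C (Dom C y) (Dom C k)" "k \<cdot> u = y"
    using kernel_factor[OF k] y z by auto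
  have y_Star: "y\<^sup>\<dagger> = u\<^sup>\<dagger> \<cdot> k\<^sup>\<dagger>"
    using Star_comp[of u k] u k_arr by simp
  have "y\<^sup>\<dagger> \<cdot> k = u\<^sup>\<dagger> \<cdot> (k\<^sup>\<dagger> \<cdot> k)"
    unfolding y_Star by (rule comp_assoc) (use u k_arr in simp_all)
  also have "\<dots> = u\<^sup>\<dagger>" using iso u unfolding isometry_def by simp
  finally have "zero_arr C (u\<^sup>\<dagger>)" using kernelD(4)[OF k] by simp
  then have "zero_arr C u" using zero_arr_Star[of "u\<^sup>\<dagger>"] u by simp
  then show ?thesis using comp_zero_arr[of u k] u k_arr by simp
qed

lemma add_squares_eq_square:
  assumes y: "y \<in> hom C T Y1" and z: "z \<in> hom C T Y2"
  obtains w where "w \<in> hom C T (Cod C w)" "w\<^sup>\<dagger> \<cdot> w = y\<^sup>\<dagger> \<cdot> y \<oplus> z\<^sup>\<dagger> \<cdot> z"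
    "zero_arr C w \<Longrightarrow> zero_arr C y \<and> zero_arr C z"
proof -
  obtain G s1 r1 s2 r2 where o: "orthonormal_biproduct C Y1 Y2 G s1 r1 s2 r2"
    using has_orthonormal_biproduct y z Cod_in_Ob by (metis hom_iff)
  note bp = orthonormal_biproduct_biproduct[OF o]
  note BP = biproduct_simps[OF bp]
  have r_Star: "r1\<^sup>\<dagger> = s1" "r2\<^sup>\<dagger> = s2" using o BP unfolding orthonormal_biproduct_def by auto
  obtain w where w: "w \<in> hom C T G" "r1 \<cdot> w = y" "r2 \<cdot> w = z"
    using product_tuple_exists[OF biproduct_is_product[OF bp] y z] by blast
  have ws: "w\<^sup>\<dagger> \<cdot> s1 = y\<^sup>\<dagger>" "w\<^sup>\<dagger> \<cdot> s2 = z\<^sup>\<dagger>" using w r_Star BP by (metis Star_comp hom_iff)+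
  have h1: "s1 \<cdot> r1 \<in> hom C G G" "s2 \<cdot> r2 \<in> hom C G G" using BP by simp_all
  have h2: "s1 \<cdot> y \<in> hom C T G" "s2 \<cdot> z \<in> hom C T G" using BP y z by simp_all
  have "w\<^sup>\<dagger> \<cdot> w = w\<^sup>\<dagger> \<cdot> ((s1 \<cdot> r1 \<oplus> s2 \<cdot> r2) \<cdot> w)" using biproduct_add_Idt[OF bp] w by simp
  also have "\<dots> = w\<^sup>\<dagger> \<cdot> (s1 \<cdot> y \<oplus> s2 \<cdot> z)" using add_comp_distrib[OF h1, of w T] w BP by simp
  also have "\<dots> = y\<^sup>\<dagger> \<cdot> y \<oplus> z\<^sup>\<dagger> \<cdot> z"
    using comp_add_distrib[OF h2, of "w\<^sup>\<dagger>" T] w BP y z comp_reassoc[OF ws(1)] comp_reassoc[OF ws(2)]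
    by simp
  finally have "w\<^sup>\<dagger> \<cdot> w = y\<^sup>\<dagger> \<cdot> y \<oplus> z\<^sup>\<dagger> \<cdot> z" .
  moreover have "zero_arr C w \<Longrightarrow> zero_arr C y \<and> zero_arr C z"
    using comp_zero_arr[of w r1] comp_zero_arr[of w r2] w BP by auto
  ultimately show ?thesis using that[of w] w by simp
qed

lemma add_squares_zeroD:
  assumes "y \<in> hom C T Y1" "z \<in> hom C T Y2" "zero_arr C (y\<^sup>\<dagger> \<cdot> y \<oplus> z\<^sup>\<dagger> \<cdot> z)"
  shows "zero_arr C y" "zero_arr C z"
proof -
  obtain w where w: "w \<in> hom C T (Cod C w)" "w\<^sup>\<dagger> \<cdot> w = y\<^sup>\<dagger> \<cdot> y \<oplus> z\<^sup>\<dagger> \<cdot> z"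
    and zero: "zero_arr C w \<Longrightarrow> zero_arr C y \<and> zero_arr C z"
    using add_squares_eq_square[OF assms(1,2)] by blast
  have "zero_arr C w" using Star_comp_self_zeroD[of w] w assms(3) by simp
  then show "zero_arr C y" "zero_arr C z" using zero by simp_all
qed

lemma contraction_in_Arr: "contraction C f \<Longrightarrow> f \<in> Arr C"
  by (simp add: contraction_def)

lemma contractionI:
  assumes f: "f \<in> Arr C" and y: "y \<in> Arr C" "Dom C y = Dom C f"
    and sum: "f\<^sup>\<dagger> \<cdot> f \<oplus> y\<^sup>\<dagger> \<cdot> y = Idt C (Dom C f)"
  shows "contraction C f"
proof -
  have "f\<^sup>\<dagger> \<cdot> f \<in> hom C (Dom C f) (Dom C f)" "y\<^sup>\<dagger> \<cdot> y \<in> hom C (Dom C f) (Dom C f)"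
    using f y by simp_all
  from arr_sum_add[OF this] have "arr_sum C (f\<^sup>\<dagger> \<cdot> f) (y\<^sup>\<dagger> \<cdot> y) (Idt C (Dom C f))"
    using sum by simp
  then show ?thesis
    unfolding contraction_def herm_le_def hermitian_def using f y by auto
qed

lemma contractionE:
  assumes "contraction C f"
  obtains y where "y \<in> Arr C" "Dom C y = Dom C f" "f\<^sup>\<dagger> \<cdot> f \<oplus> y\<^sup>\<dagger> \<cdot> y = Idt C (Dom C f)"
proof -
  obtain y where y: "y \<in> Arr C" "Dom C y = Dom C (f\<^sup>\<dagger> \<cdot> f)"
    and "arr_sum C (f\<^sup>\<dagger> \<cdot> f) (y\<^sup>\<dagger> \<cdot> y) (Idt C (Dom C f))"
    using assms unfolding contraction_def herm_le_def by blast
  then show ?thesis using that add_eqI contraction_in_Arr[OF assms] by simp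
qed

lemma isometry_is_contraction:
  assumes "isometry C f"
  shows "contraction C f"
proof -
  have f: "f \<in> Arr C" "f\<^sup>\<dagger> \<cdot> f = Idt C (Dom C f)" using assms unfolding isometry_def by auto
  have "f\<^sup>\<dagger> \<cdot> f \<oplus> (zero_hom (Dom C f) (Dom C f))\<^sup>\<dagger> \<cdot> zero_hom (Dom C f) (Dom C f) = Idt C (Dom C f)"
    using f add_zero[of "Idt C (Dom C f)" "Dom C f" "Dom C f"] by simp
  then show ?thesis using contractionI[OF f(1), of "zero_hom (Dom C f) (Dom C f)"] f by simp
qed

lemma Star_comp_self_split:
  assumes f: "f \<in> Arr C" and g: "g \<in> Arr C" "Cod C f = Dom C g"
    and y: "y \<in> Arr C" "Dom C y = Dom C g" and sum: "g\<^sup>\<dagger> \<cdot> g \<oplus> y\<^sup>\<dagger> \<cdot> y = Idt C (Dom C g)"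
  shows "f\<^sup>\<dagger> \<cdot> f = (g \<cdot> f)\<^sup>\<dagger> \<cdot> (g \<cdot> f) \<oplus> (y \<cdot> f)\<^sup>\<dagger> \<cdot> (y \<cdot> f)"
proof -
  have h1: "g\<^sup>\<dagger> \<cdot> g \<in> hom C (Dom C g) (Dom C g)" "y\<^sup>\<dagger> \<cdot> y \<in> hom C (Dom C g) (Dom C g)"
    and fh: "f \<in> hom C (Dom C f) (Dom C g)"
    and h2: "g\<^sup>\<dagger> \<cdot> (g \<cdot> f) \<in> hom C (Dom C f) (Dom C g)" "y\<^sup>\<dagger> \<cdot> (y \<cdot> f) \<in> hom C (Dom C f) (Dom C g)"
    and sfh: "f\<^sup>\<dagger> \<in> hom C (Dom C g) (Dom C f)"
    using f g y by simp_all
  have "f\<^sup>\<dagger> \<cdot> f = f\<^sup>\<dagger> \<cdot> ((g\<^sup>\<dagger> \<cdot> g \<oplus> y\<^sup>\<dagger> \<cdot> y) \<cdot> f)" using sum f g by simp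
  also have "\<dots> = f\<^sup>\<dagger> \<cdot> (g\<^sup>\<dagger> \<cdot> (g \<cdot> f) \<oplus> y\<^sup>\<dagger> \<cdot> (y \<cdot> f))"
    using add_comp_distrib[OF h1 fh] f g y by simp
  also have "\<dots> = (g \<cdot> f)\<^sup>\<dagger> \<cdot> (g \<cdot> f) \<oplus> (y \<cdot> f)\<^sup>\<dagger> \<cdot> (y \<cdot> f)"
    using comp_add_distrib[OF h2 sfh] f g y by simp
  finally show ?thesis .
qed

lemma contraction_comp:
  assumes cf: "contraction C f" and cg: "contraction C g" and fg: "Cod C f = Dom C g"
  shows "contraction C (g \<cdot> f)"
proof -
  obtain yf where yf: "yf \<in> Arr C" "Dom C yf = Dom C f" "f\<^sup>\<dagger> \<cdot> f \<oplus> yf\<^sup>\<dagger> \<cdot> yf = Idt C (Dom C f)"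
    using contractionE[OF cf] by blast
  obtain yg where yg: "yg \<in> Arr C" "Dom C yg = Dom C g" "g\<^sup>\<dagger> \<cdot> g \<oplus> yg\<^sup>\<dagger> \<cdot> yg = Idt C (Dom C g)"
    using contractionE[OF cg] by blast
  have f: "f \<in> Arr C" and g: "g \<in> Arr C" using cf cg contraction_in_Arr by auto
  define A where "A = Dom C f"
  have ygf: "yg \<cdot> f \<in> hom C A (Cod C yg)" and yfh: "yf \<in> hom C A (Cod C yf)"
    using f yg yf fg A_def by simp_all
  obtain w where w: "w \<in> hom C A (Cod C w)" "w\<^sup>\<dagger> \<cdot> w = (yg \<cdot> f)\<^sup>\<dagger> \<cdot> (yg \<cdot> f) \<oplus> yf\<^sup>\<dagger> \<cdot> yf"
    using add_squares_eq_square[OF ygf yfh] by blast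
  have h: "(g \<cdot> f)\<^sup>\<dagger> \<cdot> (g \<cdot> f) \<in> hom C A A" "(yg \<cdot> f)\<^sup>\<dagger> \<cdot> (yg \<cdot> f) \<in> hom C A A" "yf\<^sup>\<dagger> \<cdot> yf \<in> hom C A A"
    using f g yg yf fg A_def by simp_all
  have "(g \<cdot> f)\<^sup>\<dagger> \<cdot> (g \<cdot> f) \<oplus> w\<^sup>\<dagger> \<cdot> w = Idt C A"
    using yf(3) unfolding Star_comp_self_split[OF f g fg yg] w(2) add_assoc[OF h] A_def .
  then show ?thesis using contractionI[of "g \<cdot> f" w] f g fg w A_def by simp
qed

lemma contraction_biproduct_projections:
  assumes o: "orthonormal_biproduct C X1 X2 X s1 r1 s2 r2"
  shows "contraction C r1" "contraction C r2"
proof -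
  note bp = orthonormal_biproduct_biproduct[OF o]
  note BP = biproduct_simps[OF bp]
  have r_Star: "r1\<^sup>\<dagger> = s1" "r2\<^sup>\<dagger> = s2" using o BP unfolding orthonormal_biproduct_def by auto
  show "contraction C r1"
    by (rule contractionI[of r1 r2]) (use biproduct_add_Idt[OF bp] r_Star BP in simp_all)
  have "s2 \<cdot> r2 \<oplus> s1 \<cdot> r1 = Idt C X"
    using biproduct_add_Idt[OF bp] add_commute[of "s1 \<cdot> r1" X X "s2 \<cdot> r2"] BP by simp
  then show "contraction C r2"
    by (intro contractionI[of r2 r1]) (use r_Star BP in simp_all)
qed

lemma contraction_if_isometry_comp:
  assumes e: "isometry C e" and u: "u \<in> Arr C" "Cod C u = Dom C e" and c: "contraction C (e \<cdot> u)"
  shows "contraction C u"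
proof -
  have e_arr: "e \<in> Arr C" using e by (simp add: isometry_def)
  have "(e \<cdot> u)\<^sup>\<dagger> \<cdot> (e \<cdot> u) = u\<^sup>\<dagger> \<cdot> u"
    using isometry_cancel_left[OF e u] u e_arr by simp
  moreover obtain y where "y \<in> Arr C" "Dom C y = Dom C (e \<cdot> u)"
    "(e \<cdot> u)\<^sup>\<dagger> \<cdot> (e \<cdot> u) \<oplus> y\<^sup>\<dagger> \<cdot> y = Idt C (Dom C (e \<cdot> u))"
    using contractionE[OF c] by blast
  ultimately show ?thesis using contractionI[of u y] u e_arr by simp
qed

section \<open>Isometric equalisers\<close>

lemma equaliser_inD:
  assumes "equaliser_in C M f g e"
  shows "f \<in> M" "g \<in> M" "e \<in> M" "Dom C f = Dom C g" "Cod C f = Cod C g" "Cod C e = Dom C f"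
    "f \<cdot> e = g \<cdot> e"
  using assms unfolding equaliser_in_def by blast+

lemma equaliser_in_factorE:
  assumes "equaliser_in C M f g e" "h \<in> M" "Cod C h = Dom C f" "f \<cdot> h = g \<cdot> h"
  obtains u where "u \<in> M" "Dom C u = Dom C h" "Cod C u = Dom C e" "e \<cdot> u = h"
    "\<And>v. \<lbrakk>v \<in> M; Dom C v = Dom C h; Cod C v = Dom C e; e \<cdot> v = h\<rbrakk> \<Longrightarrow> v = u"
proof -
  have "\<exists>!u. u \<in> M \<and> Dom C u = Dom C h \<and> Cod C u = Dom C e \<and> e \<cdot> u = h"
    using assms unfolding equaliser_in_def by blast
  then show ?thesis using that by blast
qed

lemma isometric_equaliser_exists:
  assumes f: "f \<in> hom C A B" and g: "g \<in> hom C A B"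
  obtains k where "isometry C k" "equaliser_in C (Arr C) f g k"
proof -
  have B: "B \<in> Ob C" using f Cod_in_Ob by auto
  obtain Z s1 r1 s2 r2 q where o: "orthonormal_biproduct C B B Z s1 r1 s2 r2"
    and q: "q \<in> Arr C" "Dom C q = Z"
    and detect: "\<And>u. \<lbrakk>u \<in> Arr C; Cod C u = Z\<rbrakk> \<Longrightarrow> zero_arr C (q \<cdot> u) \<longleftrightarrow> r1 \<cdot> u = r2 \<cdot> u"
    using equality_detector_exists[OF B] by blast
  note bp = orthonormal_biproduct_biproduct[OF o]
  note BP = biproduct_simps[OF bp]
  obtain m where m: "m \<in> hom C A Z" "r1 \<cdot> m = f" "r2 \<cdot> m = g"
    using product_tuple_exists[OF biproduct_is_product[OF bp] f g] by blast
  have qm: "q \<cdot> m \<in> Arr C" "Dom C (q \<cdot> m) = A" using m q by simp_all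
  obtain k where k: "kernel C (q \<cdot> m) k" and iso: "isometry C k"
    using has_isometric_kernel[OF qm(1)] by blast
  have equalises: "f \<cdot> h = g \<cdot> h \<longleftrightarrow> zero_arr C ((q \<cdot> m) \<cdot> h)" if h: "h \<in> Arr C" "Cod C h = A" for h
    using detect[of "m \<cdot> h"] comp_reassoc[OF m(2), of h] comp_reassoc[OF m(3), of h] h m q BP by simp
  have k_arr: "k \<in> Arr C" "Cod C k = A"
    using kernelD[OF k] qm by simp_all
  have "f \<cdot> k = g \<cdot> k"
    using equalises[OF k_arr] kernelD(4)[OF k] by simp
  moreover have "\<exists>!u. u \<in> Arr C \<and> Dom C u = Dom C h \<and> Cod C u = Dom C k \<and> k \<cdot> u = h"
    if h: "h \<in> Arr C" "Cod C h = A" "f \<cdot> h = g \<cdot> h" for h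
  proof -
    have "zero_arr C ((q \<cdot> m) \<cdot> h)" using equalises h by blast
    then show ?thesis using k h qm unfolding kernel_def by simp
  qed
  ultimately have "equaliser_in C (Arr C) f g k"
    unfolding equaliser_in_def using f g k_arr by auto
  then show ?thesis using that iso by blast
qed

section \<open>The subcategory of contractions\<close>

theorem split_mono_contraction_is_isometry:
  assumes "split_mono_in C (Con C) f"
  shows "isometry C f"
proof -
  obtain g where cf: "contraction C f" and cg: "contraction C g"
    and g: "Dom C g = Cod C f" and gf: "g \<cdot> f = Idt C (Dom C f)"
    using assms unfolding split_mono_in_def Con_def by auto
  obtain yf where yf: "yf \<in> Arr C" "Dom C yf = Dom C f" "f\<^sup>\<dagger> \<cdot> f \<oplus> yf\<^sup>\<dagger> \<cdot> yf = Idt C (Dom C f)"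
    using contractionE[OF cf] by blast
  obtain yg where yg: "yg \<in> Arr C" "Dom C yg = Dom C g" "g\<^sup>\<dagger> \<cdot> g \<oplus> yg\<^sup>\<dagger> \<cdot> yg = Idt C (Dom C g)"
    using contractionE[OF cg] by blast
  have f: "f \<in> Arr C" and g_arr: "g \<in> Arr C" using cf cg contraction_in_Arr by auto
  define A where "A = Dom C f"
  have A: "A \<in> Ob C" using f A_def by simp
  define a where "a = (yg \<cdot> f)\<^sup>\<dagger> \<cdot> (yg \<cdot> f)"
  have ygf: "yg \<cdot> f \<in> hom C A (Cod C yg)" and yfh: "yf \<in> hom C A (Cod C yf)"
    using f g_arr yg yf g A_def by simp_all
  have h: "Idt C A \<in> hom C A A" "a \<in> hom C A A" "yf\<^sup>\<dagger> \<cdot> yf \<in> hom C A A"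
    using A ygf yfh a_def by simp_all
  have ff: "f\<^sup>\<dagger> \<cdot> f = Idt C A \<oplus> a"
    using Star_comp_self_split[OF f g_arr g[symmetric] yg] gf A a_def A_def by simp
  then have "Idt C A \<oplus> (a \<oplus> yf\<^sup>\<dagger> \<cdot> yf) = Idt C A"
    using yf(3) add_assoc[OF h] A_def by simp
  then have "a \<oplus> yf\<^sup>\<dagger> \<cdot> yf = zero_hom A A"
    using add_eq_left_imp_zero[OF h(1) add_in_hom[OF h(2,3)]] by simp
  then have "zero_arr C (yg \<cdot> f)"
    using add_squares_zeroD(1)[OF ygf yfh] A a_def by simp
  then have "a = zero_hom A A"
    using zero_arr_eq_zero_hom[OF comp_zero_arr[of "yg \<cdot> f" "(yg \<cdot> f)\<^sup>\<dagger>"]] ygf a_def by simp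
  then have "f\<^sup>\<dagger> \<cdot> f = Idt C A" using ff add_zero[OF h(1)] by simp
  then show ?thesis unfolding isometry_def using f A_def by simp
qed

lemma isometric_equaliser_of_contractions:
  assumes f: "f \<in> Con C" and g: "g \<in> Con C" and eq: "equaliser_in C (Arr C) f g e"
    and iso: "isometry C e"
  shows "equaliser_in C (Con C) f g e"
proof -
  have "\<exists>!u. u \<in> Con C \<and> Dom C u = Dom C h \<and> Cod C u = Dom C e \<and> e \<cdot> u = h"
    if h: "h \<in> Con C" "Cod C h = Dom C f" "f \<cdot> h = g \<cdot> h" for h
  proof -
    have "h \<in> Arr C" using h(1) contraction_in_Arr by (simp add: Con_def)
    then obtain u where u: "u \<in> Arr C" "Dom C u = Dom C h" "Cod C u = Dom C e" "e \<cdot> u = h"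
      and unique: "\<And>v. \<lbrakk>v \<in> Arr C; Dom C v = Dom C h; Cod C v = Dom C e; e \<cdot> v = h\<rbrakk> \<Longrightarrow> v = u"
      using equaliser_in_factorE[OF eq _ h(2,3)] by blast
    have "contraction C u"
      using contraction_if_isometry_comp[OF iso u(1,3)] u(4) h(1) by (simp add: Con_def)
    then show ?thesis using u unique contraction_in_Arr unfolding Con_def by blast
  qed
  then show ?thesis
    using f g equaliser_inD[OF eq] isometry_is_contraction[OF iso] unfolding equaliser_in_def Con_def
    by blast
qed

text \<open>The graph trick: equalising \<open>h \<pi>\<^sub>1\<close> and \<open>\<pi>\<^sub>2\<close> on \<open>A \<oplus> B\<close> carves out the graph of \<open>h\<close>,
  on which both \<open>h\<close> and the identity of \<open>A\<close> are represented by contractions.\<close>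

lemma split_epi_contraction_with_contractive_comp:
  assumes h: "h \<in> hom C A B"
  obtains c s where "contraction C c" "Cod C c = A" "contraction C (h \<cdot> c)"
    "s \<in> hom C A (Dom C c)" "c \<cdot> s = Idt C A"
proof -
  have A: "A \<in> Ob C" and B: "B \<in> Ob C" using h Dom_in_Ob Cod_in_Ob by auto
  obtain G i1 p1 i2 p2 where o: "orthonormal_biproduct C A B G i1 p1 i2 p2"
    using has_orthonormal_biproduct[OF A B] by blast
  note bp = orthonormal_biproduct_biproduct[OF o]
  note BP = biproduct_simps[OF bp]
  obtain \<Gamma> where \<Gamma>: "\<Gamma> \<in> hom C A G" "p1 \<cdot> \<Gamma> = Idt C A" "p2 \<cdot> \<Gamma> = h"
    using product_tuple_exists[OF biproduct_is_product[OF bp], of "Idt C A" A h] A h by auto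
  have par: "h \<cdot> p1 \<in> hom C G B" "p2 \<in> hom C G B" using h BP by simp_all
  obtain k where iso: "isometry C k" and eq: "equaliser_in C (Arr C) (h \<cdot> p1) p2 k"
    using isometric_equaliser_exists[OF par] by blast
  have k: "k \<in> Arr C" "Cod C k = G" "h \<cdot> (p1 \<cdot> k) = p2 \<cdot> k"
    using equaliser_inD[OF eq] h BP by simp_all
  have \<Gamma>_arr: "\<Gamma> \<in> Arr C" "Cod C \<Gamma> = Dom C (h \<cdot> p1)" using \<Gamma> h BP by simp_all
  have graph: "(h \<cdot> p1) \<cdot> \<Gamma> = p2 \<cdot> \<Gamma>" using \<Gamma> h BP comp_reassoc[OF \<Gamma>(2)] by simp
  obtain s where s: "s \<in> Arr C" "Dom C s = Dom C \<Gamma>" "Cod C s = Dom C k" "k \<cdot> s = \<Gamma>"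
    using equaliser_in_factorE[OF eq \<Gamma>_arr graph] by blast
  have proj: "contraction C p1" "contraction C p2"
    using contraction_biproduct_projections[OF o] by simp_all
  have "contraction C (p1 \<cdot> k)" "contraction C (h \<cdot> (p1 \<cdot> k))"
    using contraction_comp[OF isometry_is_contraction[OF iso]] proj k BP by simp_all
  moreover have "p1 \<cdot> k \<cdot> s = Idt C A" using comp_reassoc[OF s(4)] s k BP \<Gamma> by simp
  ultimately show ?thesis using that[of "p1 \<cdot> k" s] s k \<Gamma> BP by simp
qed

lemma jointly_monic_in_Con_imp_Arr:
  assumes jm: "jointly_monic_in C (Con C) I Y g"
  shows "jointly_monic_in C (Arr C) I Y g"
proof -
  have Y: "Y \<in> Ob C" and gI: "\<And>\<alpha>. \<alpha> \<in> I \<Longrightarrow> g \<alpha> \<in> Arr C \<and> Dom C (g \<alpha>) = Y"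
    using jm contraction_in_Arr unfolding jointly_monic_in_def Con_def by auto
  have "h1 = h2"
    if h: "h1 \<in> Arr C" "h2 \<in> Arr C" "Cod C h1 = Y" "Cod C h2 = Y" "Dom C h1 = Dom C h2"
      and hg: "\<forall>\<alpha> \<in> I. g \<alpha> \<cdot> h1 = g \<alpha> \<cdot> h2" for h1 h2
  proof -
    define A where "A = Dom C h1"
    obtain P t1 p1 t2 p2 where o: "orthonormal_biproduct C Y Y P t1 p1 t2 p2"
      using has_orthonormal_biproduct[OF Y Y] by blast
    note bp = orthonormal_biproduct_biproduct[OF o]
    note BP = biproduct_simps[OF bp]
    obtain hp where hp: "hp \<in> hom C A P" "p1 \<cdot> hp = h1" "p2 \<cdot> hp = h2"
      using product_tuple_exists[OF biproduct_is_product[OF bp], of h1 A h2] h A_def by auto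
    obtain c s where c: "contraction C c" "Cod C c = A" "contraction C (hp \<cdot> c)"
      and s: "s \<in> hom C A (Dom C c)" "c \<cdot> s = Idt C A"
      using split_epi_contraction_with_contractive_comp[OF hp(1)] by blast
    have c_arr: "c \<in> Arr C" using contraction_in_Arr[OF c(1)] .
    have hc: "h1 \<cdot> c = p1 \<cdot> (hp \<cdot> c)" "h2 \<cdot> c = p2 \<cdot> (hp \<cdot> c)"
      using comp_reassoc[OF hp(2), of c] comp_reassoc[OF hp(3), of c] hp c c_arr BP by simp_all
    have "h1 \<cdot> c \<in> Con C" "h2 \<cdot> c \<in> Con C"
      unfolding hc Con_def using contraction_comp[OF c(3)] contraction_biproduct_projections[OF o]
        hp c c_arr BP by simp_all
    moreover have "\<forall>\<alpha> \<in> I. g \<alpha> \<cdot> (h1 \<cdot> c) = g \<alpha> \<cdot> (h2 \<cdot> c)"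
    proof
      fix \<alpha> assume "\<alpha> \<in> I"
      then show "g \<alpha> \<cdot> (h1 \<cdot> c) = g \<alpha> \<cdot> (h2 \<cdot> c)"
        using comp_reassoc[of "g \<alpha>" h1 "g \<alpha> \<cdot> h2" c] hg gI h c c_arr A_def by simp
    qed
    ultimately have "h1 \<cdot> c = h2 \<cdot> c"
      using jm h c c_arr A_def unfolding jointly_monic_in_def by simp
    then show "h1 = h2"
      using comp_reassoc[of h1 c "h2 \<cdot> c" s] s h c_arr c A_def by simp
  qed
  then show ?thesis using Y gI unfolding jointly_monic_in_def by auto
qed

lemma Con_has_isometric_equalisers:
  assumes f: "f \<in> Con C" and g: "g \<in> Con C" and par: "Dom C f = Dom C g" "Cod C f = Cod C g"
  obtains e where "isometry C e" "equaliser_in C (Con C) f g e"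
proof -
  have "f \<in> hom C (Dom C f) (Cod C f)" "g \<in> hom C (Dom C f) (Cod C f)"
    using f g par contraction_in_Arr by (simp_all add: Con_def)
  then obtain e where "isometry C e" "equaliser_in C (Arr C) f g e"
    by (rule isometric_equaliser_exists)
  then show ?thesis using that isometric_equaliser_of_contractions[OF f g] by blast
qed

theorem equaliser_in_Con_is_isometry:
  assumes eq: "equaliser_in C (Con C) f g e"
  shows "isometry C e"
proof -
  note E = equaliser_inD[OF eq]
  obtain e' where iso': "isometry C e'" and eq': "equaliser_in C (Con C) f g e'"
    using Con_has_isometric_equalisers[OF E(1,2,4,5)] by blast
  note E' = equaliser_inD[OF eq']
  obtain u where u: "u \<in> Con C" "Dom C u = Dom C e" "Cod C u = Dom C e'" "e' \<cdot> u = e"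
    using equaliser_in_factorE[OF eq' E(3,6,7)] by blast
  obtain u' where u': "u' \<in> Con C" "Dom C u' = Dom C e'" "Cod C u' = Dom C e" "e \<cdot> u' = e'"
    using equaliser_in_factorE[OF eq E'(3,6,7)] by blast
  obtain w where unique: "\<And>v. \<lbrakk>v \<in> Con C; Dom C v = Dom C e; Cod C v = Dom C e; e \<cdot> v = e\<rbrakk> \<Longrightarrow> v = w"
    using equaliser_in_factorE[OF eq E(3,6,7)] by blast
  have arrs: "e \<in> Arr C" "e' \<in> Arr C" "u \<in> Arr C" "u' \<in> Arr C"
    using E(3) E'(3) u(1) u'(1) contraction_in_Arr by (auto simp: Con_def)
  have "u' \<cdot> u = w"
    using unique[of "u' \<cdot> u"] contraction_comp[of u u'] comp_reassoc[OF u'(4)] u u' arrs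
    by (simp add: Con_def)
  moreover have "Idt C (Dom C e) = w"
    using unique[of "Idt C (Dom C e)"] isometry_is_contraction[OF isometry_Idt] arrs
    by (simp add: Con_def)
  ultimately have "split_mono_in C (Con C) u"
    unfolding split_mono_in_def using u u' by auto
  then have "isometry C u" by (rule split_mono_contraction_is_isometry)
  then show ?thesis using isometry_comp[OF iso' _ u(3)] u(4) by simp
qed

end

theorem proposition7p4:
  fixes C :: "('o, 'm) starcat"
  assumes "pre_hilbert C"
  shows
    "(\<forall>f. split_mono_in C (Con C) f \<longrightarrow> isometry C f) \<and>
     (\<forall>(I :: 'i set) Y g. jointly_monic_in C (Con C) I Y g \<longrightarrow> jointly_monic_in C (Arr C) I Y g) \<and>
     (\<forall>f g e. f \<in> Con C \<and> g \<in> Con C \<and> equaliser_in C (Arr C) f g e \<and> isometry C e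
        \<longrightarrow> e \<in> Con C \<and> equaliser_in C (Con C) f g e) \<and>
     (\<forall>f g. f \<in> Con C \<and> g \<in> Con C \<and> Dom C f = Dom C g \<and> Cod C f = Cod C g
        \<longrightarrow> (\<exists>e. isometry C e \<and> equaliser_in C (Con C) f g e)) \<and>
     (\<forall>f g e. equaliser_in C (Con C) f g e \<longrightarrow> isometry C e)"
proof -
  interpret pre_hilbert_category C by (rule pre_hilbert_category.intro) (rule assms)
  have "isometry C e \<Longrightarrow> e \<in> Con C" for e
    using isometry_is_contraction by (simp add: Con_def)
  moreover have "\<exists>e. isometry C e \<and> equaliser_in C (Con C) f g e"
    if "f \<in> Con C" "g \<in> Con C" "Dom C f = Dom C g" "Cod C f = Cod C g" for f g
    using Con_has_isometric_equalisers[OF that] by blast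
  ultimately show ?thesis
    using split_mono_contraction_is_isometry jointly_monic_in_Con_imp_Arr
      isometric_equaliser_of_contractions equaliser_in_Con_is_isometry
    by blast
qed

end
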